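(* Let $\mathcal{A}=(S,\mathcal{P}_1,\dots,\mathcal{P}_n)$ be an Aumann structure and let $\mathbf{C}(\mathcal{A})=(\mathcal{P}(S),\sqsubseteq,(K_i)_{i\in\{1,\dots,n\}})$ be its induced spatial constraint system, with distributed spaces $(\Delta_I)_{I\subseteq\{1,\dots,n\}}$. Then $\Delta_I=D_I$ for every $I\subseteq\{1,\dots,n\}$.
   Context: An Aumann structure $(S,\mathcal{P}_1,\dots,\mathcal{P}_n)$ consists of a set $S$ of states and, for each agent $i$, a partition $\mathcal{P}_i$ of $S$; $\mathcal{P}_i(s)$ denotes the block of $\mathcal{P}_i$ containing $s$. Events are subsets of $S$. Define $K_i(e)=\{s\in S: \mathcal{P}_i(s)\subseteq e\}$ and $D_I(e)=\{s\in S : \bigcap_{i\in I}\mathcal{P}_i(s)\subseteq e\}$ (with the intersection over the empty family taken to be $S$). The induced structure $\mathbf{C}(\mathcal{A})$ has constraints $\mathcal{P}(S)$ ordered by $e_1\sqsubseteq e_2$ iff $e_2\subseteq e_1$ (so join is intersection, bottom is $S$, top is $\emptyset$), and agent $i$'s function is $K_i$. In a complete lattice $(\mathrm{Con},\sqsubseteq)$ a space function is a self-map preserving joins of directed sets, binary joins and the bottom; for a family of space functions $(s_i)_{i\in G}$, the distributed space of $I\subseteq G$ is $\Delta_I=\max\{f \text{ space function}: f(c)\sqsubseteq s_i(c) \text{ for all } c \text{ and all } i\in I\}$ (this maximum exists). *)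

theory Defs
  imports Main "HOL-Library.Disjoint_Sets"
begin

definition aumann_structure :: "'a set \<Rightarrow> nat \<Rightarrow> (nat \<Rightarrow> 'a set set) \<Rightarrow> bool" where
  "aumann_structure S n P \<longleftrightarrow> (\<forall>i\<in>{1..n}. partition_on S (P i))"

definition block :: "(nat \<Rightarrow> 'a set set) \<Rightarrow> nat \<Rightarrow> 'a \<Rightarrow> 'a set" where
  "block P i s = (THE B. B \<in> P i \<and> s \<in> B)"

definition Kop :: "'a set \<Rightarrow> (nat \<Rightarrow> 'a set set) \<Rightarrow> nat \<Rightarrow> 'a set \<Rightarrow> 'a set" where
  "Kop S P i e = {s \<in> S. block P i s \<subseteq> e}"

text \<open>Distributed knowledge operator D_I (empty intersection taken to be S).\<close>
definition Dop :: "'a set \<Rightarrow> (nat \<Rightarrow> 'a set set) \<Rightarrow> nat set \<Rightarrow> 'a set \<Rightarrow> 'a set" where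
  "Dop S P I e = {s \<in> S. S \<inter> (\<Inter>i\<in>I. block P i s) \<subseteq> e}"

text \<open>The constraint lattice is Pow S ordered by reverse inclusion:
  e1 \<sqsubseteq> e2 iff e2 \<subseteq> e1; join = intersection, bottom = S.
  A directed set (w.r.t. this order) is a nonempty family D \<subseteq> Pow S such that any two
  members have an upper bound in D, i.e. a member contained in both; its join is S \<inter> \<Inter>D.\<close>
definition directed_con :: "'a set \<Rightarrow> 'a set set \<Rightarrow> bool" where
  "directed_con S D \<longleftrightarrow> D \<subseteq> Pow S \<and> D \<noteq> {} \<and>
     (\<forall>a\<in>D. \<forall>b\<in>D. \<exists>c\<in>D. c \<subseteq> a \<and> c \<subseteq> b)"

definition space_function :: "'a set \<Rightarrow> ('a set \<Rightarrow> 'a set) \<Rightarrow> bool" where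
  "space_function S f \<longleftrightarrow>
     (\<forall>c. c \<subseteq> S \<longrightarrow> f c \<subseteq> S) \<and>
     f S = S \<and>
     (\<forall>a b. a \<subseteq> S \<longrightarrow> b \<subseteq> S \<longrightarrow> f (a \<inter> b) = f a \<inter> f b) \<and>
     (\<forall>D. directed_con S D \<longrightarrow> f (S \<inter> \<Inter>D) = S \<inter> (\<Inter>c\<in>D. f c))"

text \<open>f is the distributed space Delta_I of the family (s i): the maximum (pointwise, w.r.t.
  reverse inclusion) among space functions g with g c \<sqsubseteq> s i c for all c and all i in I.\<close>
definition is_distributed_space ::
  "'a set \<Rightarrow> (nat \<Rightarrow> 'a set \<Rightarrow> 'a set) \<Rightarrow> nat set \<Rightarrow> ('a set \<Rightarrow> 'a set) \<Rightarrow> bool" where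
  "is_distributed_space S s I f \<longleftrightarrow>
     space_function S f \<and>
     (\<forall>c. c \<subseteq> S \<longrightarrow> (\<forall>i\<in>I. s i c \<subseteq> f c)) \<and>
     (\<forall>g. space_function S g \<and> (\<forall>c. c \<subseteq> S \<longrightarrow> (\<forall>i\<in>I. s i c \<subseteq> g c))
          \<longrightarrow> (\<forall>c. c \<subseteq> S \<longrightarrow> f c \<subseteq> g c))"

end

theory Submission
  imports Defs
begin

text \<open>The knowledge operators K_i are below D_I for i in I, since each block P_i(s) contains
  the intersection of the blocks of s. Conversely, a space function g above every K_i with
  i in I maps the block P_i(s) to a set containing s. Since I is finite, g preserves the finite
  intersection of these blocks, so s is in g applied to that intersection; if s is in D_I(c),
  this intersection is contained in c, and monotonicity of g gives s in g(c).\<close>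

lemma block_in_partition:
  assumes "partition_on S (P i)" "s \<in> S"
  shows "block P i s \<in> P i" "s \<in> block P i s"
proof -
  obtain B where B: "B \<in> P i" "s \<in> B"
    using partition_onD1[OF assms(1)] assms(2) by blast
  have "C = B" if "C \<in> P i" "s \<in> C" for C
    using disjointD[OF partition_onD2[OF assms(1)] that(1) B(1)] that(2) B(2) by blast
  with B have "\<exists>!B. B \<in> P i \<and> s \<in> B" by blast
  then have "block P i s \<in> P i \<and> s \<in> block P i s"
    unfolding block_def by (rule theI')
  then show "block P i s \<in> P i" "s \<in> block P i s" by simp_all
qed

lemma block_subset:
  assumes "partition_on S (P i)" "s \<in> S"
  shows "block P i s \<subseteq> S"
  using block_in_partition(1)[of S P i s, OF assms] partition_onD1[OF assms(1)] by blast

lemma space_function_mono: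
  assumes "space_function S g" "a \<subseteq> b" "b \<subseteq> S"
  shows "g a \<subseteq> g b"
proof -
  have "g a = g (a \<inter> b)" using assms(2) by (simp add: Int_absorb2)
  also have "\<dots> = g a \<inter> g b"
    using assms unfolding space_function_def by (meson order_trans)
  finally show ?thesis by blast
qed

lemma space_function_INT:
  assumes g: "space_function S g" and "finite J" and "\<And>j. j \<in> J \<Longrightarrow> A j \<subseteq> S"
  shows "g (S \<inter> (\<Inter>j\<in>J. A j)) = S \<inter> (\<Inter>j\<in>J. g (A j))"
  using assms(2,3)
proof (induction J rule: finite_induct)
  case empty
  then show ?case using g unfolding space_function_def by simp
next
  case (insert j J)
  have "S \<inter> (\<Inter>i\<in>insert j J. A i) = A j \<inter> (S \<inter> (\<Inter>i\<in>J. A i))"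
    using insert.prems by auto
  then have "g (S \<inter> (\<Inter>i\<in>insert j J. A i)) = g (A j) \<inter> g (S \<inter> (\<Inter>i\<in>J. A i))"
    using g insert.prems unfolding space_function_def by simp
  also have "\<dots> = S \<inter> (\<Inter>i\<in>insert j J. g (A i))"
    using insert g unfolding space_function_def by auto
  finally show ?case .
qed

lemma space_function_Dop: "space_function S (Dop S P I)"
  unfolding space_function_def
proof (intro conjI allI impI)
  fix D assume "directed_con S D"
  then have "D \<noteq> {}" unfolding directed_con_def by simp
  then show "Dop S P I (S \<inter> \<Inter>D) = S \<inter> (\<Inter>c\<in>D. Dop S P I c)"
    unfolding Dop_def by auto
qed (auto simp: Dop_def)

lemma Kop_subset_Dop: "i \<in> I \<Longrightarrow> Kop S P i c \<subseteq> Dop S P I c"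
  unfolding Kop_def Dop_def by auto

lemma Dop_subset_space_function:
  assumes part: "\<And>i. i \<in> I \<Longrightarrow> partition_on S (P i)" and "finite I"
    and g: "space_function S g"
    and Kop_g: "\<And>i c. i \<in> I \<Longrightarrow> c \<subseteq> S \<Longrightarrow> Kop S P i c \<subseteq> g c"
    and "c \<subseteq> S"
  shows "Dop S P I c \<subseteq> g c"
proof
  fix s assume "s \<in> Dop S P I c"
  then have s: "s \<in> S" and blocks_c: "S \<inter> (\<Inter>i\<in>I. block P i s) \<subseteq> c"
    unfolding Dop_def by auto
  have blocks_S: "block P i s \<subseteq> S" if "i \<in> I" for i
    using block_subset[of S P i s, OF part[OF that] s] .
  have "s \<in> Kop S P i (block P i s)" for i
    using s unfolding Kop_def by simp
  then have "s \<in> g (block P i s)" if "i \<in> I" for i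
    using Kop_g[OF that blocks_S[OF that]] by blast
  then have "s \<in> S \<inter> (\<Inter>i\<in>I. g (block P i s))"
    using s by blast
  then have "s \<in> g (S \<inter> (\<Inter>i\<in>I. block P i s))"
    by (simp only: space_function_INT[OF g \<open>finite I\<close> blocks_S])
  also have "\<dots> \<subseteq> g c"
    using space_function_mono[OF g blocks_c \<open>c \<subseteq> S\<close>] .
  finally show "s \<in> g c" .
qed

theorem mainTheorem8:
  fixes S :: "'a set" and n :: nat and P :: "nat \<Rightarrow> 'a set set" and I :: "nat set"
  assumes "aumann_structure S n P"
    and "I \<subseteq> {1..n}"
  shows "is_distributed_space S (Kop S P) I (Dop S P I)"
proof -
  have part: "\<And>i. i \<in> I \<Longrightarrow> partition_on S (P i)"
    using assms unfolding aumann_structure_def by auto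
  have "finite I"
    using assms(2) finite_subset by blast
  show ?thesis
    unfolding is_distributed_space_def
  proof (intro conjI allI impI ballI)
    show "space_function S (Dop S P I)" by (rule space_function_Dop)
  next
    fix c i assume "i \<in> I"
    then show "Kop S P i c \<subseteq> Dop S P I c" by (rule Kop_subset_Dop)
  next
    fix g c
    assume "space_function S g \<and> (\<forall>c\<subseteq>S. \<forall>i\<in>I. Kop S P i c \<subseteq> g c)" and "c \<subseteq> S"
    then show "Dop S P I c \<subseteq> g c"
      using Dop_subset_space_function[of I S P g c, OF part \<open>finite I\<close>] by blast
  qed
qed

end
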